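(* Let $(\Omega,\mathcal{A},\mathbb{P})$ be a probability space and $k\colon\Omega\times\mathbb{R}\times\mathbb{R}\to\mathbb{R}$ jointly measurable with $|k(\omega,s,t)|\le1$ almost surely, and suppose the mean kernel $K(s,t)=\mathbb{E}_\omega[k(\omega,s,t)]$ is continuous and positive definite ($k(\omega,\cdot,\cdot)$ need not be positive definite). Let $Z=\mathbb{R}^d\times\mathbb{R}\times\mathbb{R}$ and let $\rho$ be a Borel probability measure on $Z$. Let $f\colon\mathbb{R}^d\to\mathbb{R}$ have the representation $$f(x)=\int_Z c(a,b,t)K(\langle a,x\rangle+b,t)\,d\rho(a,b,t)$$ for some $c\in L^2(\rho)$ with $\|c\|_{L^2(\rho)}\le C$. Let $z_i=(a_i,b_i,t_i)$, $i=1,\dots,N$, be i.i.d. with law $\rho$ and $\omega_i$, $i=1,\dots,N$, i.i.d. with law $\mathbb{P}$, all mutually independent, and set $$F_N(x)=\frac1N\sum_{i=1}^N c(z_i)\,k(\omega_i,\langle a_i,x\rangle+b_i,t_i)$$ (using any fixed measurable representative of $c$). Then for every probability measure $\mu$ on $\mathbb{R}^d$, $$\mathbb{E}\|F_N-f\|^2_{L^2(\mu)}\le\frac{C^2}{N},\qquad \mathbb{P}\big(\|F_N-f\|_{L^2(\mu)}>\epsilon\big)\le\frac{C^2}{N\epsilon^2}\quad\text{for all }\epsilon>0.$$ *)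

theory Defs
  imports "HOL-Probability.Probability"
begin

definition pos_def_kernel :: "(real \<Rightarrow> real \<Rightarrow> real) \<Rightarrow> bool" where
  "pos_def_kernel K \<longleftrightarrow> (\<forall>s t. K s t = K t s) \<and>
     (\<forall>(n::nat) (x::nat \<Rightarrow> real) (\<alpha>::nat \<Rightarrow> real).
        0 \<le> (\<Sum>i<n. \<Sum>j<n. \<alpha> i * \<alpha> j * K (x i) (x j)))"

end

theory Submission
  imports Defs
begin

text \<open>For fixed \<open>x\<close>, \<open>F\<^sub>N(x)\<close> is the empirical mean of \<open>N\<close> independent copies of the random
feature \<open>g\<^sub>x(z, \<omega>) = c(z) k(\<omega>, \<langle>a, x\<rangle> + b, t)\<close>. By Fubini its mean is \<open>f(x)\<close>, and since
\<open>|k| \<le> 1\<close> its second moment is at most \<open>\<parallel>c\<parallel>\<^sup>2 \<le> C\<^sup>2\<close>. Independence makes the cross terms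
vanish, so \<open>E |F\<^sub>N(x) - f(x)|\<^sup>2 = Var g\<^sub>x / N \<le> C\<^sup>2 / N\<close>; integrating against \<open>\<mu>\<close> and exchanging
the integrals (Tonelli) gives the mean-square bound, and Markov's inequality for
\<open>\<parallel>F\<^sub>N - f\<parallel>\<^sup>2\<close> gives the tail bound.\<close>

lemma (in prob_space) integral_PiM_component:
  fixes f :: "'a \<Rightarrow> 'b::{banach, second_countable_topology}"
  assumes "i \<in> I" and "integrable M f"
  shows "integrable (PiM I (\<lambda>_. M)) (\<lambda>\<xi>. f (\<xi> i))"
    and "(\<integral>\<xi>. f (\<xi> i) \<partial>PiM I (\<lambda>_. M)) = expectation f"
proof -
  have "distr (PiM I (\<lambda>_. M)) M (\<lambda>\<xi>. \<xi> i) = M"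
    using assms(1) by (intro distr_PiM_component) (auto intro: prob_space_axioms)
  then show "integrable (PiM I (\<lambda>_. M)) (\<lambda>\<xi>. f (\<xi> i))"
    and "(\<integral>\<xi>. f (\<xi> i) \<partial>PiM I (\<lambda>_. M)) = expectation f"
    using assms integrable_distr_eq[of "\<lambda>\<xi>. \<xi> i" "PiM I (\<lambda>_. M)" M f]
      integral_distr[of "\<lambda>\<xi>. \<xi> i" "PiM I (\<lambda>_. M)" M f]
    by (simp_all add: measurable_component_singleton)
qed

lemma (in prob_space) integral_PiM_mult_components:
  fixes f g :: "'a \<Rightarrow> real"
  assumes "finite I" "i \<in> I" "j \<in> I" "i \<noteq> j" and f: "integrable M f" and g: "integrable M g"
  shows "integrable (PiM I (\<lambda>_. M)) (\<lambda>\<xi>. f (\<xi> i) * g (\<xi> j))"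
    and "(\<integral>\<xi>. f (\<xi> i) * g (\<xi> j) \<partial>PiM I (\<lambda>_. M)) = expectation f * expectation g"
proof -
  interpret PiM: product_prob_space "\<lambda>_. M" by unfold_locales
  define h where "h l = (if l = i then f else if l = j then g else (\<lambda>_. 1))" for l
  have h_int: "integrable M (h l)" for l
    using f g by (simp add: h_def)
  have "(\<Prod>l\<in>I. h l (\<xi> l)) = f (\<xi> i) * g (\<xi> j)" for \<xi>
  proof -
    have "(\<Prod>l\<in>I. h l (\<xi> l)) = (\<Prod>l\<in>I. (if l = i then f (\<xi> l) else 1) * (if l = j then g (\<xi> l) else 1))"
      using \<open>i \<noteq> j\<close> by (intro prod.cong) (auto simp: h_def)
    then show ?thesis
      using assms(1-3) by (simp add: prod.distrib)
  qed
  moreover have "(\<Prod>l\<in>I. integral\<^sup>L M (h l)) = expectation f * expectation g"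
  proof -
    have "(\<Prod>l\<in>I. integral\<^sup>L M (h l))
        = (\<Prod>l\<in>I. (if l = i then expectation f else 1) * (if l = j then expectation g else 1))"
      using \<open>i \<noteq> j\<close> by (intro prod.cong) (auto simp: h_def prob_space)
    then show ?thesis
      using assms(1-3) by (simp add: prod.distrib)
  qed
  ultimately show "integrable (PiM I (\<lambda>_. M)) (\<lambda>\<xi>. f (\<xi> i) * g (\<xi> j))"
    and "(\<integral>\<xi>. f (\<xi> i) * g (\<xi> j) \<partial>PiM I (\<lambda>_. M)) = expectation f * expectation g"
    using PiM.product_integrable_prod[of I h] PiM.product_integral_prod[of I h] assms(1) h_int by simp_all
qed

lemma (in prob_space) integral_PiM_sum_components_square:
  fixes h :: "'a \<Rightarrow> real"
  assumes "finite I" and h: "integrable M h" and h2: "integrable M (\<lambda>x. (h x)\<^sup>2)"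
    and centered: "expectation h = 0"
  shows "integrable (PiM I (\<lambda>_. M)) (\<lambda>\<xi>. (\<Sum>i\<in>I. h (\<xi> i))\<^sup>2)"
    and "(\<integral>\<xi>. (\<Sum>i\<in>I. h (\<xi> i))\<^sup>2 \<partial>PiM I (\<lambda>_. M)) = card I * expectation (\<lambda>x. (h x)\<^sup>2)"
proof -
  have square: "(\<Sum>i\<in>I. h (\<xi> i))\<^sup>2 = (\<Sum>i\<in>I. \<Sum>j\<in>I. h (\<xi> i) * h (\<xi> j))" for \<xi>
    by (simp add: power2_eq_square sum_product)
  have cross: "integrable (PiM I (\<lambda>_. M)) (\<lambda>\<xi>. h (\<xi> i) * h (\<xi> j)) \<and>
      (\<integral>\<xi>. h (\<xi> i) * h (\<xi> j) \<partial>PiM I (\<lambda>_. M)) = (if i = j then expectation (\<lambda>x. (h x)\<^sup>2) else 0)"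
    if "i \<in> I" "j \<in> I" for i j
  proof (cases "i = j")
    case True
    then show ?thesis
      using integral_PiM_component[OF \<open>i \<in> I\<close> h2]
      by (simp add: power2_eq_square)
  next
    case False
    then show ?thesis
      using integral_PiM_mult_components[OF \<open>finite I\<close> that False h h] centered by simp
  qed
  then show "integrable (PiM I (\<lambda>_. M)) (\<lambda>\<xi>. (\<Sum>i\<in>I. h (\<xi> i))\<^sup>2)"
    unfolding square by (intro Bochner_Integration.integrable_sum) auto
  have "(\<integral>\<xi>. (\<Sum>i\<in>I. h (\<xi> i))\<^sup>2 \<partial>PiM I (\<lambda>_. M))
      = (\<Sum>i\<in>I. \<Sum>j\<in>I. if i = j then expectation (\<lambda>x. (h x)\<^sup>2) else 0)"
    unfolding square using cross
    by (simp add: Bochner_Integration.integral_sum)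
  then show "(\<integral>\<xi>. (\<Sum>i\<in>I. h (\<xi> i))\<^sup>2 \<partial>PiM I (\<lambda>_. M)) = card I * expectation (\<lambda>x. (h x)\<^sup>2)"
    using \<open>finite I\<close> by simp
qed

lemma (in prob_space) nn_integral_PiM_sample_mean_square_error:
  fixes g :: "'a \<Rightarrow> real"
  assumes g: "integrable M g" and g2: "integrable M (\<lambda>x. (g x)\<^sup>2)" and "N > 0"
  shows "(\<integral>\<^sup>+\<xi>. ennreal ((1 / real N * (\<Sum>i<N. g (\<xi> i)) - expectation g)\<^sup>2) \<partial>PiM {..<N} (\<lambda>_. M))
    = ennreal (variance g / real N)"
proof -
  define h where "h = (\<lambda>x. g x - expectation g)"
  have h: "integrable M h" and centered: "expectation h = 0"
    using g by (simp_all add: h_def prob_space)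
  have h2: "integrable M (\<lambda>x. (h x)\<^sup>2)"
    using g g2 by (simp add: h_def power2_diff)
  have "(1 / real N * (\<Sum>i<N. g (\<xi> i)) - expectation g)\<^sup>2 = (\<Sum>i<N. h (\<xi> i))\<^sup>2 / (real N)\<^sup>2" for \<xi>
    using \<open>N > 0\<close> by (simp add: h_def sum_subtractf field_simps)
  moreover have "(\<integral>\<xi>. (\<Sum>i<N. h (\<xi> i))\<^sup>2 / (real N)\<^sup>2 \<partial>PiM {..<N} (\<lambda>_. M)) = variance g / real N"
    using integral_PiM_sum_components_square(2)[of "{..<N}", OF _ h h2 centered] \<open>N > 0\<close>
    by (simp add: h_def power2_eq_square)
  ultimately show ?thesis
    using integral_PiM_sum_components_square(1)[of "{..<N}", OF _ h h2 centered]
    by (subst nn_integral_eq_integral) auto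
qed

lemma measurable_sample_mean_square_error:
  fixes g :: "'x \<Rightarrow> 'a \<Rightarrow> real"
  assumes "sigma_finite_measure M" and g: "(\<lambda>(x, w). g x w) \<in> borel_measurable (X \<Otimes>\<^sub>M M)"
  shows "(\<lambda>(\<xi>, x). ennreal ((1 / real N * (\<Sum>i<N. g x (\<xi> i)) - (\<integral>w. g x w \<partial>M))\<^sup>2))
    \<in> borel_measurable (PiM {..<N} (\<lambda>_. M) \<Otimes>\<^sub>M X)"
proof -
  have mean: "(\<lambda>x. \<integral>w. g x w \<partial>M) \<in> borel_measurable X"
    using sigma_finite_measure.borel_measurable_lebesgue_integral[OF assms] .
  have "(\<lambda>p. g (snd p) (fst p i)) \<in> borel_measurable (PiM {..<N} (\<lambda>_. M) \<Otimes>\<^sub>M X)" if "i < N" for i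
  proof -
    have "(\<lambda>p. fst p i) \<in> measurable (PiM {..<N} (\<lambda>_. M) \<Otimes>\<^sub>M X) M"
      using that by (intro measurable_compose[OF measurable_fst measurable_component_singleton]) simp
    then have "(\<lambda>p. (snd p, fst p i)) \<in> measurable (PiM {..<N} (\<lambda>_. M) \<Otimes>\<^sub>M X) (X \<Otimes>\<^sub>M M)"
      by (intro measurable_Pair measurable_snd)
    from measurable_compose[OF this g] show ?thesis
      by simp
  qed
  then have "(\<lambda>p. \<Sum>i<N. g (snd p) (fst p i)) \<in> borel_measurable (PiM {..<N} (\<lambda>_. M) \<Otimes>\<^sub>M X)"
    by (intro borel_measurable_sum) simp
  then show ?thesis
    using mean by measurable
qed

lemma (in prob_space) Monte_Carlo_mean_square_L2_error:
  fixes g :: "'x \<Rightarrow> 'a \<Rightarrow> real"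
  assumes "prob_space X" and g: "(\<lambda>(x, w). g x w) \<in> borel_measurable (X \<Otimes>\<^sub>M M)"
    and g2: "\<And>x. x \<in> space X \<Longrightarrow> integrable M (\<lambda>w. (g x w)\<^sup>2)"
    and second_moment: "\<And>x. x \<in> space X \<Longrightarrow> expectation (\<lambda>w. (g x w)\<^sup>2) \<le> B"
    and "N > 0"
  shows "(\<integral>\<^sup>+\<xi>. (\<integral>\<^sup>+x. ennreal ((1 / real N * (\<Sum>i<N. g x (\<xi> i)) - expectation (g x))\<^sup>2) \<partial>X)
      \<partial>PiM {..<N} (\<lambda>_. M)) \<le> ennreal (B / real N)"
proof -
  interpret X: prob_space X by fact
  interpret PiM: prob_space "PiM {..<N} (\<lambda>_. M)"
    by (intro prob_space_PiM prob_space_axioms)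
  interpret PiM_X: pair_sigma_finite "PiM {..<N} (\<lambda>_. M)" X ..
  have pointwise: "(\<integral>\<^sup>+\<xi>. ennreal ((1 / real N * (\<Sum>i<N. g x (\<xi> i)) - expectation (g x))\<^sup>2)
      \<partial>PiM {..<N} (\<lambda>_. M)) \<le> ennreal (B / real N)" if "x \<in> space X" for x
  proof -
    have gx: "g x \<in> borel_measurable M"
      using measurable_Pair2[OF g that] by simp
    have "integrable M (g x)"
      using square_integrable_imp_integrable[OF gx g2[OF that]] .
    then have "variance (g x) = expectation (\<lambda>w. (g x w)\<^sup>2) - (expectation (g x))\<^sup>2"
      using g2[OF that] by (rule variance_eq)
    then have "variance (g x) \<le> B"
      using second_moment[OF that] zero_le_power2[of "expectation (g x)"] by linarith
    then show ?thesis
      using nn_integral_PiM_sample_mean_square_error[OF \<open>integrable M (g x)\<close> g2[OF that] \<open>N > 0\<close>]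
      by (simp add: divide_right_mono ennreal_leI)
  qed
  have "(\<integral>\<^sup>+\<xi>. (\<integral>\<^sup>+x. ennreal ((1 / real N * (\<Sum>i<N. g x (\<xi> i)) - expectation (g x))\<^sup>2) \<partial>X)
      \<partial>PiM {..<N} (\<lambda>_. M))
    = (\<integral>\<^sup>+x. (\<integral>\<^sup>+\<xi>. ennreal ((1 / real N * (\<Sum>i<N. g x (\<xi> i)) - expectation (g x))\<^sup>2)
      \<partial>PiM {..<N} (\<lambda>_. M)) \<partial>X)"
    using PiM_X.Fubini'[OF measurable_sample_mean_square_error[OF sigma_finite_measure_axioms g]] ..
  also have "\<dots> \<le> (\<integral>\<^sup>+x. ennreal (B / real N) \<partial>X)"
    using pointwise by (intro nn_integral_mono) auto
  also have "\<dots> = ennreal (B / real N)"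
    by (simp add: X.emeasure_space_1)
  finally show ?thesis .
qed

text \<open>Since \<open>enn2real \<infinity> = 0\<close>, the points where \<open>Q\<close> is infinite have to be counted explicitly.\<close>

lemma (in finite_measure) measure_sqrt_gt_le_nn_integral:
  fixes Q :: "'a \<Rightarrow> ennreal"
  assumes [measurable]: "Q \<in> borel_measurable M"
    and bound: "(\<integral>\<^sup>+x. Q x \<partial>M) \<le> ennreal B" and "B \<ge> 0" and "\<epsilon> > 0"
  shows "{x \<in> space M. sqrt (enn2real (Q x)) > \<epsilon> \<or> Q x = \<infinity>} \<in> sets M"
    and "measure M {x \<in> space M. sqrt (enn2real (Q x)) > \<epsilon> \<or> Q x = \<infinity>} \<le> B / \<epsilon>\<^sup>2"
proof -
  define A where "A = {x \<in> space M. sqrt (enn2real (Q x)) > \<epsilon> \<or> Q x = \<infinity>}"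
  show A_sets: "A \<in> sets M"
    unfolding A_def by measurable
  have "ennreal (\<epsilon>\<^sup>2) * indicator A x \<le> Q x" for x
  proof (cases "x \<in> A \<and> Q x \<noteq> \<infinity>")
    case True
    then have "\<epsilon>\<^sup>2 < (sqrt (enn2real (Q x)))\<^sup>2"
      using \<open>\<epsilon> > 0\<close> by (intro power_strict_mono) (auto simp: A_def)
    then have "ennreal (\<epsilon>\<^sup>2) \<le> ennreal (enn2real (Q x))"
      by (intro ennreal_leI) simp
    with True show ?thesis
      by (simp add: ennreal_enn2real_if)
  qed (auto simp: A_def)
  then have "ennreal (\<epsilon>\<^sup>2) * emeasure M A \<le> (\<integral>\<^sup>+x. Q x \<partial>M)"
    using A_sets by (simp flip: nn_integral_cmult_indicator add: nn_integral_mono)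
  then have "ennreal (\<epsilon>\<^sup>2 * measure M A) \<le> ennreal B"
    using bound by (simp add: emeasure_eq_measure ennreal_mult)
  then show "measure M A \<le> B / \<epsilon>\<^sup>2"
    using \<open>B \<ge> 0\<close> \<open>\<epsilon> > 0\<close> by (simp add: field_simps)
qed

lemma (in pair_sigma_finite) AE_pair_measure_snd:
  assumes "AE y in M2. Q y"
  shows "AE w in M1 \<Otimes>\<^sub>M M2. Q (snd w)"
proof -
  obtain N where N: "{y \<in> space M2. \<not> Q y} \<subseteq> N" "N \<in> null_sets M2"
    using assms by (auto elim!: AE_E)
  show ?thesis
  proof (rule AE_I')
    show "space M1 \<times> N \<in> null_sets (M1 \<Otimes>\<^sub>M M2)"
      using N(2) by (simp add: null_sets_def M2.emeasure_pair_measure_Times)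
    show "{w \<in> space (M1 \<Otimes>\<^sub>M M2). \<not> Q (snd w)} \<subseteq> space M1 \<times> N"
      using N(1) by (auto simp: space_pair_measure)
  qed
qed

definition random_feature ::
    "('a::euclidean_space \<times> real \<times> real \<Rightarrow> real) \<Rightarrow> ('w \<Rightarrow> real \<Rightarrow> real \<Rightarrow> real) \<Rightarrow>
     'a \<Rightarrow> ('a \<times> real \<times> real) \<times> 'w \<Rightarrow> real" where
  "random_feature c k x = (\<lambda>(z, \<omega>). c z * k \<omega> (fst z \<bullet> x + fst (snd z)) (snd (snd z)))"

lemma measurable_random_feature:
  fixes k :: "'w \<Rightarrow> real \<Rightarrow> real \<Rightarrow> real" and X :: "'a::euclidean_space measure"
  assumes k: "(\<lambda>(\<omega>, s, t). k \<omega> s t) \<in> borel_measurable (P \<Otimes>\<^sub>M borel \<Otimes>\<^sub>M borel)"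
    and c: "c \<in> borel_measurable R"
    and X: "sets X = sets borel" and R: "sets R = sets borel"
  shows "(\<lambda>(x, w). random_feature c k x w) \<in> borel_measurable (X \<Otimes>\<^sub>M (R \<Otimes>\<^sub>M P))"
proof -
  have R_prod: "sets R = sets (borel \<Otimes>\<^sub>M borel \<Otimes>\<^sub>M borel)"
    unfolding R borel_prod ..
  have [measurable]: "c \<in> borel_measurable (borel \<Otimes>\<^sub>M borel \<Otimes>\<^sub>M borel)"
    using c by (simp add: measurable_cong_sets[OF R_prod refl])
  let ?B = "borel \<Otimes>\<^sub>M ((borel \<Otimes>\<^sub>M borel \<Otimes>\<^sub>M borel) \<Otimes>\<^sub>M P)"
  define \<Phi> where
    "\<Phi> p = (snd (snd p), fst (fst (snd p)) \<bullet> fst p + fst (snd (fst (snd p))), snd (snd (fst (snd p))))"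
    for p :: "'a \<times> ('a \<times> real \<times> real) \<times> 'w"
  have "\<Phi> \<in> measurable ?B (P \<Otimes>\<^sub>M borel \<Otimes>\<^sub>M borel)"
    unfolding \<Phi>_def by measurable
  from measurable_compose[OF this k]
  have "(\<lambda>p. c (fst (snd p)) * (\<lambda>(\<omega>, s, t). k \<omega> s t) (\<Phi> p)) \<in> borel_measurable ?B"
    by measurable
  also have "(\<lambda>p. c (fst (snd p)) * (\<lambda>(\<omega>, s, t). k \<omega> s t) (\<Phi> p)) = (\<lambda>(x, w). random_feature c k x w)"
    by (auto simp: \<Phi>_def random_feature_def)
  finally have meas: "(\<lambda>(x, w). random_feature c k x w) \<in> borel_measurable ?B" .
  have sets_eq: "sets (X \<Otimes>\<^sub>M (R \<Otimes>\<^sub>M P)) = sets ?B"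
    using X R_prod by (intro sets_pair_measure_cong) simp_all
  show ?thesis
    using meas unfolding measurable_cong_sets[OF sets_eq refl] .
qed

lemma random_feature_second_moment:
  fixes R :: "('a::euclidean_space \<times> real \<times> real) measure" and P :: "'w measure"
  assumes "prob_space R" "prob_space P"
    and meas: "random_feature c k x \<in> borel_measurable (R \<Otimes>\<^sub>M P)"
    and c: "c \<in> borel_measurable R" and c_L2: "integrable R (\<lambda>z. (c z)\<^sup>2)"
    and k_bound: "AE \<omega> in P. \<forall>s t. \<bar>k \<omega> s t\<bar> \<le> 1"
  shows "integrable (R \<Otimes>\<^sub>M P) (\<lambda>w. (random_feature c k x w)\<^sup>2)"
    and "(\<integral>w. (random_feature c k x w)\<^sup>2 \<partial>(R \<Otimes>\<^sub>M P)) \<le> (\<integral>z. (c z)\<^sup>2 \<partial>R)"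
proof -
  interpret R: prob_space R by fact
  interpret W: prob_space P by fact
  interpret pair_prob_space R P ..
  have c2: "(\<lambda>z. (c z)\<^sup>2) \<in> borel_measurable R"
    using c by measurable
  have c2_fst: "integrable (R \<Otimes>\<^sub>M P) (\<lambda>w. (c (fst w))\<^sup>2)"
    using integrable_distr_eq[OF measurable_fst[of R P] c2] c_L2 by (simp add: W.distr_pair_fst)
  have c2_fst_integral: "(\<integral>w. (c (fst w))\<^sup>2 \<partial>(R \<Otimes>\<^sub>M P)) = (\<integral>z. (c z)\<^sup>2 \<partial>R)"
    using integral_distr[OF measurable_fst[of R P] c2] by (simp add: W.distr_pair_fst)
  have bound: "AE w in R \<Otimes>\<^sub>M P. (random_feature c k x w)\<^sup>2 \<le> (c (fst w))\<^sup>2"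
    using AE_pair_measure_snd[OF k_bound]
  proof eventually_elim
    case (elim w)
    obtain z \<omega> where w: "w = (z, \<omega>)"
      by fastforce
    have "(k \<omega> (fst z \<bullet> x + fst (snd z)) (snd (snd z)))\<^sup>2 \<le> 1"
      using elim by (simp add: w abs_square_le_1)
    then show ?case
      by (simp add: w random_feature_def power_mult_distrib mult_left_le)
  qed
  show integrable: "integrable (R \<Otimes>\<^sub>M P) (\<lambda>w. (random_feature c k x w)\<^sup>2)"
    using c2_fst bound meas by (intro Bochner_Integration.integrable_bound[OF c2_fst]) auto
  show "(\<integral>w. (random_feature c k x w)\<^sup>2 \<partial>(R \<Otimes>\<^sub>M P)) \<le> (\<integral>z. (c z)\<^sup>2 \<partial>R)"
    using integral_mono_AE[OF integrable c2_fst bound] c2_fst_integral by simp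
qed

lemma integral_random_feature:
  fixes R :: "('a::euclidean_space \<times> real \<times> real) measure" and P :: "'w measure"
  assumes "pair_sigma_finite R P" and "integrable (R \<Otimes>\<^sub>M P) (random_feature c k x)"
  shows "(\<integral>w. random_feature c k x w \<partial>(R \<Otimes>\<^sub>M P))
    = (\<integral>z. c z * (\<integral>\<omega>. k \<omega> (fst z \<bullet> x + fst (snd z)) (snd (snd z)) \<partial>P) \<partial>R)"
  using pair_sigma_finite.integral_fst'[OF assms] by (simp add: random_feature_def)

theorem theorem9:
  fixes P :: "'w measure"
    and k :: "'w \<Rightarrow> real \<Rightarrow> real \<Rightarrow> real"
    and \<rho> :: "('a::euclidean_space \<times> real \<times> real) measure"
    and c :: "'a \<times> real \<times> real \<Rightarrow> real"
    and f :: "'a \<Rightarrow> real"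
    and \<mu> :: "'a measure"
    and C :: real and N :: nat
  assumes P: "prob_space P"
    and k_meas: "(\<lambda>(\<omega>, s, t). k \<omega> s t) \<in> borel_measurable (P \<Otimes>\<^sub>M borel \<Otimes>\<^sub>M borel)"
    and k_bound: "AE \<omega> in P. \<forall>s t. \<bar>k \<omega> s t\<bar> \<le> 1"
    and K_cont: "continuous_on UNIV (\<lambda>(s, t). \<integral>\<omega>. k \<omega> s t \<partial>P)"
    and K_pd: "pos_def_kernel (\<lambda>s t. \<integral>\<omega>. k \<omega> s t \<partial>P)"
    and \<rho>: "prob_space \<rho>" "sets \<rho> = sets borel"
    and c_meas: "c \<in> borel_measurable \<rho>"
    and c_L2: "integrable \<rho> (\<lambda>z. (c z)\<^sup>2)"
    and c_norm: "sqrt (\<integral>z. (c z)\<^sup>2 \<partial>\<rho>) \<le> C"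
    and f_rep: "\<And>x. f x = (\<integral>z. c z * (\<integral>\<omega>. k \<omega> (fst z \<bullet> x + fst (snd z)) (snd (snd z)) \<partial>P) \<partial>\<rho>)"
    and N: "N \<ge> 1"
    and \<mu>: "prob_space \<mu>" "sets \<mu> = sets borel"
  defines "S \<equiv> PiM {..<N} (\<lambda>_. \<rho> \<Otimes>\<^sub>M P)"
    and "F \<equiv> (\<lambda>\<xi> x. (1 / real N) * (\<Sum>i<N. c (fst (\<xi> i)) *
              k (snd (\<xi> i)) (fst (fst (\<xi> i)) \<bullet> x + fst (snd (fst (\<xi> i)))) (snd (snd (fst (\<xi> i))))))"
  shows "(\<integral>\<^sup>+ \<xi>. (\<integral>\<^sup>+ x. ennreal ((F \<xi> x - f x)\<^sup>2) \<partial>\<mu>) \<partial>S) \<le> ennreal (C\<^sup>2 / real N) \<and>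
         (\<forall>\<epsilon>>0.
           {\<xi> \<in> space S. sqrt (enn2real (\<integral>\<^sup>+ x. ennreal ((F \<xi> x - f x)\<^sup>2) \<partial>\<mu>)) > \<epsilon>
                \<or> (\<integral>\<^sup>+ x. ennreal ((F \<xi> x - f x)\<^sup>2) \<partial>\<mu>) = \<infinity>} \<in> sets S \<and>
           measure S {\<xi> \<in> space S. sqrt (enn2real (\<integral>\<^sup>+ x. ennreal ((F \<xi> x - f x)\<^sup>2) \<partial>\<mu>)) > \<epsilon>
                \<or> (\<integral>\<^sup>+ x. ennreal ((F \<xi> x - f x)\<^sup>2) \<partial>\<mu>) = \<infinity>}
             \<le> C\<^sup>2 / (real N * \<epsilon>\<^sup>2))"
proof -
  interpret P: prob_space P by fact
  interpret \<rho>: prob_space \<rho> by fact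
  interpret \<rho>P: pair_prob_space \<rho> P ..
  interpret \<mu>: prob_space \<mu> by fact
  interpret S: prob_space S
    unfolding S_def by (intro prob_space_PiM \<rho>P.prob_space_axioms)
  have feature_meas: "(\<lambda>(x, w). random_feature c k x w) \<in> borel_measurable (\<mu> \<Otimes>\<^sub>M (\<rho> \<Otimes>\<^sub>M P))"
    using k_meas c_meas \<mu>(2) \<rho>(2) by (rule measurable_random_feature)
  have feature_x_meas: "random_feature c k x \<in> borel_measurable (\<rho> \<Otimes>\<^sub>M P)" for x
    using measurable_Pair2[OF feature_meas] sets_eq_imp_space_eq[OF \<mu>(2)] by simp
  note second_moment = random_feature_second_moment[OF \<rho>(1) P feature_x_meas c_meas c_L2 k_bound]
  have f_eq: "f = (\<lambda>x. \<rho>P.expectation (random_feature c k x))"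
    using integral_random_feature[OF \<rho>P.pair_sigma_finite_axioms
        \<rho>P.square_integrable_imp_integrable[OF feature_x_meas second_moment(1)]] f_rep
    by (simp add: fun_eq_iff)
  have F_eq: "F = (\<lambda>\<xi> x. 1 / real N * (\<Sum>i<N. random_feature c k x (\<xi> i)))"
    by (simp add: F_def random_feature_def split_beta)
  define Q where "Q \<xi> = (\<integral>\<^sup>+ x. ennreal ((F \<xi> x - f x)\<^sup>2) \<partial>\<mu>)" for \<xi>
  have Q_meas: "Q \<in> borel_measurable S"
    unfolding Q_def F_eq f_eq S_def
    by (intro \<mu>.borel_measurable_nn_integral measurable_sample_mean_square_error
        \<rho>P.sigma_finite_measure_axioms feature_meas)
  have mean_square_error: "(\<integral>\<^sup>+\<xi>. Q \<xi> \<partial>S) \<le> ennreal (C\<^sup>2 / real N)"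
    unfolding Q_def F_eq f_eq S_def
    using feature_meas second_moment(1) order_trans[OF second_moment(2) sqrt_le_D[OF c_norm]] N
    by (intro \<rho>P.Monte_Carlo_mean_square_L2_error \<mu>(1)) auto
  show ?thesis
    using mean_square_error S.measure_sqrt_gt_le_nn_integral[OF Q_meas mean_square_error]
    unfolding Q_def by simp
qed

end
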